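(* $h(3)\leq 5$; that is, every $\mathbb{Z}_3$-colorable graph is $\Gamma'$-colorable for every Abelian group $\Gamma'$ of order at least $5$.
   Context: Graphs are finite, may have multiple edges but no loops. For an Abelian group $\Gamma$, $G$ is $\Gamma$-colorable if for some (equivalently, any) orientation $D$ of $G$ and every $\varphi:E(G)\to\Gamma$ there is $c:V(G)\to\Gamma$ with $c(w)-c(u)\neq\varphi(uw)$ for every directed edge $uw$ of $D$. $h(k)$ is the least number such that whenever a graph is $\Gamma$-colorable for some Abelian group $\Gamma$ of order $k$, it is $\Gamma'$-colorable for every Abelian group $\Gamma'$ of order $|\Gamma'|\geq h(k)$. *)

theory Defs
  imports Main "HOL-Library.Numeral_Type"
begin

text \<open>A finite multigraph without loops, given together with an orientation:
  vertex set V, edge set E, and ends e = (tail, head).  Parallel edges are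
  distinct elements of E with the same ends.\<close>
definition loopless_multigraph :: "'v set \<Rightarrow> 'e set \<Rightarrow> ('e \<Rightarrow> 'v \<times> 'v) \<Rightarrow> bool" where
  "loopless_multigraph V E ends \<longleftrightarrow> finite V \<and> finite E \<and>
     (\<forall>e\<in>E. fst (ends e) \<in> V \<and> snd (ends e) \<in> V \<and> fst (ends e) \<noteq> snd (ends e))"

definition group_colorable ::
  "'v set \<Rightarrow> 'e set \<Rightarrow> ('e \<Rightarrow> 'v \<times> 'v) \<Rightarrow> 'g::ab_group_add itself \<Rightarrow> bool" where
  "group_colorable V E ends (_::'g itself) \<longleftrightarrow>
     (\<forall>\<phi>::'e \<Rightarrow> 'g. \<exists>c::'v \<Rightarrow> 'g.
        \<forall>e\<in>E. c (snd (ends e)) - c (fst (ends e)) \<noteq> \<phi> e)"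

end

theory Submission
  imports Defs "HOL-Library.Product_Plus" "HOL-Analysis.Cartesian_Space"
begin

text \<open>Color in rounds: ask for a \<open>\<int>\<^sub>3\<close>-coloring once per round and let every vertex
  collect the list of its colors.  The values prescribed on the edges in a round may depend on
  the colors the ends of each edge received earlier, so on every edge one can force any outcome
  of the game \<open>forcible\<close>.  A map \<open>F\<close> from color lists to \<open>\<Gamma>'\<close> yields a
  \<open>\<Gamma>'\<close>-coloring once, for every \<open>\<delta>\<close>, the outcome \<open>F ys - F xs \<noteq> \<delta>\<close> can be forced.
  Such forcing codes pass along injective homomorphisms, so a suitable subgroup suffices: if
  \<open>4g \<noteq> 0\<close> for some \<open>g\<close>, the map \<open>a \<mapsto> a g\<close> works in a single round; otherwise
  \<open>|\<Gamma>'| \<ge> 5\<close> and exponent 4 give a subgroup \<open>\<int>\<^sub>4 \<times> \<int>\<^sub>2\<close> or \<open>\<int>\<^sub>2\<^sup>3\<close>, for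
  which codes of length 2 and 3 are verified by evaluating the game.\<close>

text \<open>In each round the forbidder names a value \<open>p\<close> for the edge, and the coloring answers
  with colors \<open>a\<close> at the tail and \<open>b\<close> at the head subject only to \<open>b - a \<noteq> p\<close>.\<close>

fun forcible :: "nat \<Rightarrow> ('a::ab_group_add list \<Rightarrow> 'a list \<Rightarrow> bool) \<Rightarrow> bool" where
  "forcible 0 R \<longleftrightarrow> R [] []"
| "forcible (Suc k) R \<longleftrightarrow> (\<exists>p. \<forall>a b. b - a \<noteq> p \<longrightarrow> forcible k (\<lambda>xs ys. R (a # xs) (b # ys)))"

definition forcing_code :: "nat \<Rightarrow> ('a::ab_group_add list \<Rightarrow> 'h::ab_group_add) \<Rightarrow> bool" where
  "forcing_code k F \<longleftrightarrow> (\<forall>\<delta>. forcible k (\<lambda>xs ys. F ys - F xs \<noteq> \<delta>))"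

lemma forcible_mono:
  assumes "forcible k R" "\<And>xs ys. R xs ys \<Longrightarrow> S xs ys"
  shows "forcible k S"
  using assms
proof (induction k arbitrary: R S)
  case 0
  then show ?case by simp
next
  case (Suc k)
  then obtain p where p: "\<forall>a b. b - a \<noteq> p \<longrightarrow> forcible k (\<lambda>xs ys. R (a # xs) (b # ys))"
    by auto
  have "forcible k (\<lambda>xs ys. S (a # xs) (b # ys))" if "b - a \<noteq> p" for a b
  proof (rule Suc.IH)
    show "forcible k (\<lambda>xs ys. R (a # xs) (b # ys))"
      using p that by blast
  qed (rule Suc.prems(2))
  then show ?case
    by auto
qed

lemma coloring_from_forcible:
  fixes R :: "'e \<Rightarrow> 'a::ab_group_add list \<Rightarrow> 'a list \<Rightarrow> bool"
  assumes "group_colorable V E ends TYPE('a)" "\<forall>e\<in>E. forcible k (R e)"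
  shows "\<exists>c. \<forall>e\<in>E. R e (c (fst (ends e))) (c (snd (ends e)))"
  using assms(2)
proof (induction k arbitrary: R)
  case 0
  then show ?case by auto
next
  case (Suc k)
  then have "\<forall>e\<in>E. \<exists>p. \<forall>a b. b - a \<noteq> p \<longrightarrow> forcible k (\<lambda>xs ys. R e (a # xs) (b # ys))"
    by simp
  then obtain p where p: "\<forall>e\<in>E. \<forall>a b. b - a \<noteq> p e \<longrightarrow> forcible k (\<lambda>xs ys. R e (a # xs) (b # ys))"
    by (rule bchoice [elim_format]) blast
  obtain c1 :: "_ \<Rightarrow> 'a" where c1: "\<forall>e\<in>E. c1 (snd (ends e)) - c1 (fst (ends e)) \<noteq> p e"
    using assms(1) unfolding group_colorable_def by blast
  obtain c2 where "\<forall>e\<in>E. R e (c1 (fst (ends e)) # c2 (fst (ends e))) (c1 (snd (ends e)) # c2 (snd (ends e)))"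
    using Suc.IH[of "\<lambda>e xs ys. R e (c1 (fst (ends e)) # xs) (c1 (snd (ends e)) # ys)"] p c1 by blast
  then show ?case
    by (intro exI[of _ "\<lambda>v. c1 v # c2 v"]) simp
qed

lemma group_colorable_if_forcing_code:
  assumes "group_colorable V E ends TYPE('a::ab_group_add)" "forcing_code k (F :: 'a list \<Rightarrow> 'h::ab_group_add)"
  shows "group_colorable V E ends TYPE('h)"
  unfolding group_colorable_def
proof (intro allI)
  fix \<phi>
  obtain c where "\<forall>e\<in>E. F (c (snd (ends e))) - F (c (fst (ends e))) \<noteq> \<phi> e"
    using coloring_from_forcible[OF assms(1), of k "\<lambda>e xs ys. F ys - F xs \<noteq> \<phi> e"] assms(2)
    unfolding forcing_code_def by blast
  then show "\<exists>c. \<forall>e\<in>E. c (snd (ends e)) - c (fst (ends e)) \<noteq> \<phi> e"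
    by (intro exI[of _ "F \<circ> c"]) simp
qed

lemma forcing_code_comp_inj_additive:
  assumes "forcing_code k F" "additive \<iota>" "inj \<iota>"
  shows "forcing_code k (\<iota> \<circ> F)"
  unfolding forcing_code_def
proof
  fix \<delta>
  have \<iota>_diff: "\<iota> (F ys) - \<iota> (F xs) = \<iota> (F ys - F xs)" for xs ys
    using additive.diff[OF assms(2)] by simp
  show "forcible k (\<lambda>xs ys. (\<iota> \<circ> F) ys - (\<iota> \<circ> F) xs \<noteq> \<delta>)"
  proof (cases "\<delta> \<in> range \<iota>")
    case True
    then obtain d where "\<delta> = \<iota> d"
      by blast
    have "forcible k (\<lambda>xs ys. F ys - F xs \<noteq> d)"
      using assms(1) unfolding forcing_code_def by blast
    then show ?thesis
      by (rule forcible_mono) (simp add: \<iota>_diff \<open>\<delta> = \<iota> d\<close> inj_eq[OF assms(3)])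
  next
    case False
    have "forcible k (\<lambda>xs ys. F ys - F xs \<noteq> 0)"
      using assms(1) unfolding forcing_code_def by blast
    then show ?thesis
      by (rule forcible_mono) (use False in \<open>auto simp: \<iota>_diff\<close>)
  qed
qed

lemma forcing_code_one_round:
  fixes f :: "'a::ab_group_add \<Rightarrow> 'h::ab_group_add"
  assumes "\<And>a b a' b'. f b - f a = f b' - f a' \<Longrightarrow> b - a = b' - a'"
  shows "forcing_code 1 (\<lambda>xs. f (hd xs))"
  unfolding forcing_code_def
proof
  fix \<delta>
  have "\<exists>p. \<forall>a b. b - a \<noteq> p \<longrightarrow> f b - f a \<noteq> \<delta>"
  proof (cases "\<exists>a0 b0. f b0 - f a0 = \<delta>")
    case True
    then obtain a0 b0 where "f b0 - f a0 = \<delta>"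
      by blast
    then show ?thesis
      using assms by (intro exI[of _ "b0 - a0"]) metis
  qed blast
  then show "forcible 1 (\<lambda>xs ys. f (hd ys) - f (hd xs) \<noteq> \<delta>)"
    by simp
qed

text \<open>Written with \<open>if\<close> so that, together with the two \<open>_Cons_if\<close> rules below,
  \<open>if_weak_cong\<close> makes the simplifier stop at the first witness or counterexample instead of
  evaluating the whole game tree.\<close>

fun forcible_within :: "'a::ab_group_add list \<Rightarrow> nat \<Rightarrow> ('a list \<Rightarrow> 'a list \<Rightarrow> bool) \<Rightarrow> bool" where
  "forcible_within us 0 R \<longleftrightarrow> R [] []"
| "forcible_within us (Suc k) R \<longleftrightarrow>
     list_ex (\<lambda>p. list_all (\<lambda>a. list_all (\<lambda>b.
       if b - a \<noteq> p then forcible_within us k (\<lambda>xs ys. R (a # xs) (b # ys)) else True) us) us) us"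

lemma forcible_within_UNIV:
  assumes "set us = UNIV"
  shows "forcible_within us k R \<longleftrightarrow> forcible k R"
  by (induction k arbitrary: R) (simp_all add: list_ex_iff list_all_iff assms)

lemma list_ex_Cons_if: "list_ex P (x # xs) \<longleftrightarrow> (if P x then True else list_ex P xs)"
  by simp

lemma list_all_Cons_if: "list_all P (x # xs) \<longleftrightarrow> (if P x then list_all P xs else False)"
  by simp

lemma set_0_1_2_eq_UNIV: "set [0, 1, 2 :: 3] = UNIV"
proof -
  have "x \<in> set [0, 1, 2]" for x :: 3
    using exhaust_3[of x] by auto
  then show ?thesis
    by blast
qed

definition digit3 :: "3 \<Rightarrow> nat" where
  "digit3 a = (if a = 0 then 0 else if a = 1 then 1 else 2)"

lemma forcing_code_of_4_times_nonzero:
  fixes g :: "'g::ab_group_add"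
  assumes "g + g + g + g \<noteq> 0"
  shows "forcing_code 1 (\<lambda>xs. [0, g, g + g] ! digit3 (hd xs))"
proof -
  let ?f = "\<lambda>a. [0, g, g + g] ! digit3 a"
  have "g + g \<noteq> 0"
    using assms by (metis add.assoc add.right_neutral)
  moreover have "g \<noteq> 0" "- g \<noteq> g"
    using \<open>g + g \<noteq> 0\<close> by (auto simp: neg_eq_iff_add_eq_0)
  moreover have "- g - g \<noteq> g + g"
  proof
    assume "- g - g = g + g"
    then have "g + g + g + g = 0"
      by (metis add.assoc diff_add_cancel neg_eq_iff_add_eq_0 minus_add_distrib diff_conv_add_uminus)
    with assms show False ..
  qed
  ultimately have "\<forall>a b a' b' :: 3. ?f b - ?f a = ?f b' - ?f a' \<longrightarrow> b - a = b' - a'"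
    unfolding forall_3 by (auto simp: digit3_def)
  then show ?thesis
    by (intro forcing_code_one_round) blast
qed

definition code_4x2 :: "3 list \<Rightarrow> 4 \<times> 2" where
  "code_4x2 xs =
     [[(3, 1), (0, 0), (1, 1)], [(1, 0), (0, 0), (0, 1)], [(2, 1), (1, 1), (1, 0)]]
     ! digit3 (xs ! 0) ! digit3 (xs ! 1)"

definition code_2x2x2 :: "3 list \<Rightarrow> 2 \<times> 2 \<times> 2" where
  "code_2x2x2 xs =
     [[[(0, 1, 0), (0, 0, 0), (0, 0, 1)], [(0, 0, 1), (0, 0, 0), (1, 1, 0)], [(0, 1, 0), (0, 0, 0), (1, 0, 1)]],
      [[(0, 1, 0), (0, 1, 1), (1, 0, 0)], [(1, 0, 1), (0, 1, 0), (1, 0, 0)], [(0, 0, 1), (1, 1, 0), (1, 1, 1)]],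
      [[(1, 1, 1), (1, 0, 0), (0, 0, 0)], [(1, 0, 1), (0, 1, 0), (0, 0, 1)], [(0, 0, 0), (0, 0, 1), (1, 0, 0)]]]
     ! digit3 (xs ! 0) ! digit3 (xs ! 1) ! digit3 (xs ! 2)"

lemma forcing_code_4x2: "forcing_code 2 code_4x2"
  unfolding forcing_code_def forcible_within_UNIV[OF set_0_1_2_eq_UNIV, symmetric] numeral_2_eq_2
    split_paired_All forall_4 forall_2
  by (simp del: list_ex_Cons_iff list.pred_inject(2)
      add: list_ex_Cons_if list_all_Cons_if code_4x2_def digit3_def zero_prod_def)

lemma forcing_code_2x2x2: "forcing_code 3 code_2x2x2"
  unfolding forcing_code_def forcible_within_UNIV[OF set_0_1_2_eq_UNIV, symmetric] numeral_3_eq_3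
    split_paired_All forall_2
  by (simp del: list_ex_Cons_iff list.pred_inject(2)
      add: list_ex_Cons_if list_all_Cons_if code_2x2x2_def digit3_def zero_prod_def)

lemma (in additive) inj_iff_kernel_trivial: "inj f \<longleftrightarrow> (\<forall>x. f x = 0 \<longrightarrow> x = 0)"
  by (metis diff eq_iff_diff_eq_0 inj_def zero)

lemma additive_pair:
  assumes "additive f" "additive g"
  shows "additive (\<lambda>(x, y). f x + g y)"
  using assms by (auto simp: additive_def algebra_simps)

definition mult2 :: "2 \<Rightarrow> 'g::ab_group_add \<Rightarrow> 'g" where
  "mult2 x g = (if x = 0 then 0 else g)"

definition mult4 :: "4 \<Rightarrow> 'g::ab_group_add \<Rightarrow> 'g" where
  "mult4 x g = (if x = 0 then 0 else if x = 1 then g else if x = 2 then g + g else g + g + g)"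

lemma additive_mult2:
  assumes "g + g = 0"
  shows "additive (\<lambda>x. mult2 x g)"
proof -
  have "g + (g + x) = x" for x
    using assms by (metis add.assoc add_0)
  then show ?thesis
    using assms unfolding additive_def mult2_def forall_2 by simp
qed

lemma additive_mult4:
  assumes "g + g + g + g = 0"
  shows "additive (\<lambda>x. mult4 x g)"
proof -
  have "g + (g + (g + g)) = 0" "g + (g + (g + (g + x))) = x" for x
    using assms by (simp_all add: add.assoc[symmetric])
  then show ?thesis
    unfolding additive_def mult4_def forall_4 by (simp add: add.assoc)
qed

lemma ex_inj_additive_4x2:
  fixes g h :: "'g::ab_group_add"
  assumes "g + g + g + g = 0" "g + g \<noteq> 0" "h + h = 0" "h \<notin> {0, g, g + g, g + g + g}"
  shows "\<exists>\<iota> :: 4 \<times> 2 \<Rightarrow> 'g. additive \<iota> \<and> inj \<iota>"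
proof -
  let ?\<iota> = "\<lambda>(x, y). mult4 x g + mult2 y h"
  interpret additive ?\<iota>
    using additive_pair additive_mult4 additive_mult2 assms(1,3) by blast
  have negs: "- g = g + g + g" "- (g + g) = g + g" "- (g + g + g) = g"
    using assms(1) by (simp_all add: minus_unique add.assoc)
  have "g \<noteq> 0" "g + g + g \<noteq> 0"
    using assms(1,2) by (force, metis add.left_neutral)
  then have "mult4 x g = 0 \<Longrightarrow> x = 0" for x
    using assms(2) unfolding mult4_def by (auto split: if_splits)
  moreover have "h \<noteq> - mult4 x g" for x
    using assms(4) negs unfolding mult4_def by auto
  ultimately have "(x, y) = 0" if "?\<iota> (x, y) = 0" for x y
    using that assms(4) unfolding mult2_def by (auto simp: zero_prod_def add_eq_0_iff split: if_splits)
  then have "inj ?\<iota>"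
    unfolding inj_iff_kernel_trivial by auto
  then show ?thesis
    using additive_axioms by blast
qed

lemma ex_inj_additive_2x2x2:
  fixes g1 g2 g3 :: "'g::ab_group_add"
  assumes "\<And>x::'g. x + x = 0" "g1 \<noteq> 0" "g2 \<notin> {0, g1}" "g3 \<notin> {0, g1, g2, g1 + g2}"
  shows "\<exists>\<iota> :: 2 \<times> 2 \<times> 2 \<Rightarrow> 'g. additive \<iota> \<and> inj \<iota>"
proof -
  let ?\<iota> = "\<lambda>(x, y, z). mult2 x g1 + (mult2 y g2 + mult2 z g3)"
  interpret additive ?\<iota>
    using additive_pair[OF additive_mult2 additive_pair[OF additive_mult2 additive_mult2],
        OF assms(1) assms(1) assms(1)]
    by (simp add: case_prod_beta')
  have "- x = x" for x :: 'g
    using assms(1) by (simp add: minus_unique)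
  then have "(x, y, z) = 0" if "?\<iota> (x, y, z) = 0" for x y z
    using that assms(2-4) unfolding mult2_def by (auto simp: zero_prod_def add_eq_0_iff split: if_splits)
  then have "inj ?\<iota>"
    unfolding inj_iff_kernel_trivial by auto
  then show ?thesis
    using additive_axioms by blast
qed

lemma ex_not_in_four:
  assumes "4 < CARD('a::finite)"
  shows "\<exists>x::'a. x \<notin> {a, b, c, d}"
proof -
  have "card {a, b, c, d} \<le> 4"
    using card_length[of "[a, b, c, d]"] by simp
  then show ?thesis
    using assms by (metis UNIV_eq_I not_le)
qed

lemma ex_order_2_outside_cyclic4:
  fixes g :: "'g::{ab_group_add, finite}"
  assumes "4 < CARD('g)" "\<And>x::'g. x + x + x + x = 0" "g + g \<noteq> 0"
  shows "\<exists>h. h + h = 0 \<and> h \<notin> {0, g, g + g, g + g + g}"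
proof -
  obtain h :: 'g where h: "h \<notin> {0, g, g + g, g + g + g}"
    using ex_not_in_four assms(1) by blast
  consider "h + h = 0" | "h + h = g + g" | "h + h \<notin> {0, g + g}"
    by blast
  then show ?thesis
  proof cases
    case 1
    then show ?thesis
      using h by blast
  next
    case 2
    then have "(h - g) + (h - g) = 0"
      by (simp add: algebra_simps)
    moreover have "h - g \<notin> {0, g, g + g, g + g + g}"
      using h assms(2)[of g] by (auto simp: algebra_simps)
    ultimately show ?thesis
      by blast
  next
    case 3
    have "(h + h) + (h + h) = 0"
      using assms(2) by (simp add: add.assoc)
    moreover have "h + h \<noteq> g"
    proof
      assume "h + h = g"
      then have "g + g = (h + h) + (h + h)"
        by simp
      with assms(2)[of h] assms(3) show False
        by (simp add: add.assoc)
    qed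
    moreover have "h + h \<noteq> g + g + g"
    proof
      assume "h + h = g + g + g"
      then have "(g + g + g + g) + (g + g) = (h + h) + (h + h)"
        by (simp add: algebra_simps)
      with assms(2)[of h] assms(2)[of g] assms(3) show False
        by (simp add: add.assoc)
    qed
    ultimately show ?thesis
      using 3 by blast
  qed
qed

lemma exponent_4_embeds_4x2_or_2x2x2:
  assumes "4 < CARD('g::{ab_group_add, finite})" "\<And>x::'g. x + x + x + x = 0"
  shows "(\<exists>\<iota> :: 4 \<times> 2 \<Rightarrow> 'g. additive \<iota> \<and> inj \<iota>) \<or>
         (\<exists>\<iota> :: 2 \<times> 2 \<times> 2 \<Rightarrow> 'g. additive \<iota> \<and> inj \<iota>)"
proof (cases "\<exists>g::'g. g + g \<noteq> 0")
  case True
  then obtain g :: 'g where "g + g \<noteq> 0"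
    by blast
  with assms obtain h where "h + h = 0" "h \<notin> {0, g, g + g, g + g + g}"
    using ex_order_2_outside_cyclic4 by blast
  then show ?thesis
    using ex_inj_additive_4x2 assms(2) \<open>g + g \<noteq> 0\<close> by blast
next
  case False
  then have "x + x = 0" for x :: 'g
    by blast
  moreover obtain g1 :: 'g where "g1 \<notin> {0, 0, 0, 0}"
    using ex_not_in_four[OF assms(1)] by blast
  moreover obtain g2 :: 'g where "g2 \<notin> {0, g1, g1, g1}"
    using ex_not_in_four[OF assms(1)] by blast
  moreover obtain g3 :: 'g where "g3 \<notin> {0, g1, g2, g1 + g2}"
    using ex_not_in_four[OF assms(1)] by blast
  ultimately show ?thesis
    using ex_inj_additive_2x2x2[of g1 g2 g3] by auto
qed

lemma forcing_code_of_card_gt_4: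
  assumes "4 < CARD('g::{ab_group_add, finite})"
  shows "\<exists>k (F :: 3 list \<Rightarrow> 'g). forcing_code k F"
proof (cases "\<exists>g::'g. g + g + g + g \<noteq> 0")
  case True
  then show ?thesis
    using forcing_code_of_4_times_nonzero by blast
next
  case False
  then consider (Z4xZ2) \<iota> :: "4 \<times> 2 \<Rightarrow> 'g" where "additive \<iota>" "inj \<iota>"
    | (Z2xZ2xZ2) \<iota> :: "2 \<times> 2 \<times> 2 \<Rightarrow> 'g" where "additive \<iota>" "inj \<iota>"
    using exponent_4_embeds_4x2_or_2x2x2[OF assms] by blast
  then show ?thesis
  proof cases
    case (Z4xZ2 \<iota>)
    then have "forcing_code 2 (\<iota> \<circ> code_4x2)"
      by (intro forcing_code_comp_inj_additive forcing_code_4x2)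
    then show ?thesis
      by blast
  next
    case (Z2xZ2xZ2 \<iota>)
    then have "forcing_code 3 (\<iota> \<circ> code_2x2x2)"
      by (intro forcing_code_comp_inj_additive forcing_code_2x2x2)
    then show ?thesis
      by blast
  qed
qed

theorem mainTheorem13:
  fixes V :: "'v set" and E :: "'e set" and ends :: "'e \<Rightarrow> 'v \<times> 'v"
  assumes "loopless_multigraph V E ends"
    and "group_colorable V E ends TYPE(3)"
    and "CARD('g::{ab_group_add, finite}) \<ge> 5"
  shows "group_colorable V E ends TYPE('g)"
proof -
  have "4 < CARD('g)"
    using assms(3) by simp
  then obtain k and F :: "3 list \<Rightarrow> 'g" where "forcing_code k F"
    using forcing_code_of_card_gt_4 by blast
  then show ?thesis
    using group_colorable_if_forcing_code assms(2) by blast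
qed

end
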